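(* Let $\alpha=(\alpha_1,\ldots,\alpha_n)$ be a composition, $\sigma\in S_n$, and $i\in\{1,\ldots,n-1\}$ with $\alpha_i=\alpha_{i+1}$. Then for every $T\in\mathrm{NAF}(\alpha,\sigma)$, $$\sum_{U\in\mathrm{F}(\alpha,\sigma s_i)}P_i(T,U)=1.$$
   Context: Permutations are in one-line notation; $\sigma s_i$ is $\sigma$ with the entries in positions $i,i+1$ exchanged. A composition is a sequence of nonnegative integers. The skyline diagram is $\mathrm{dg}(\alpha)=\{(j,r):1\le j\le n,\ 1\le r\le\alpha_j\}$ ($j$ = column, $r$ = row) and the augmented diagram is $\mathrm{adg}(\alpha)=\mathrm{dg}(\alpha)\cup\{(j,0):1\le j\le n\}$ (row $0$ is the basement). For $u=(j,r)\in\mathrm{dg}(\alpha)$: $\mathrm{leg}(u)=\alpha_j-r$; the left arm set is $\{(j',r-1)\in\mathrm{adg}(\alpha):j'<j,\ \alpha_{j'}<\alpha_j\}$, the right arm set is $\{(j',r)\in\mathrm{dg}(\alpha):j'>j,\ \alpha_{j'}\le\alpha_j\}$, $\mathrm{Arm}(u)$ is their union and $\mathrm{arm}(u)=|\mathrm{Arm}(u)|$. Two boxes of $\mathrm{adg}(\alpha)$ attack each other if they are in the same row, or in consecutive rows with the box in the higher row strictly to the right of the box in the lower row. A filling of shape $\alpha$ and basement $\tau\in S_n$ is a map $T:\mathrm{adg}(\alpha)\to\{1,\ldots,n\}$ with $T(j,0)=\tau_j$; $\mathrm{F}(\alpha,\tau)$ is the set of these, and $\mathrm{NAF}(\alpha,\tau)$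 the subset of non-attacking ones (attacking boxes have distinct entries). For integers $a,b$ let $\chi(a,b)=1$ if $a>b$ and $0$ otherwise, and $\chi(a,b,c)=\chi(a,b)+\chi(b,c)-\chi(a,c)$. Fix $i$ with $\alpha_i=\alpha_{i+1}$. For a filling $T$ and $0\le r\le\alpha_i$, $\mathrm{swap}_r(T)$ exchanges the entries of boxes $(i,r)$ and $(i+1,r)$, and $\Omega_{0,h}=\mathrm{swap}_h\circ\cdots\circ\mathrm{swap}_0$. For $T\in\mathrm{NAF}(\alpha,\tau)$ and $0\le r\le\alpha_i-1$, let $a=T(i,r)$, $b=T(i+1,r)$, $c=T(i,r+1)$, $d=T(i+1,r+1)$, $A=\mathrm{arm}(i+1,r+1)$, $\ell=\mathrm{leg}(i+1,r+1)$, and define $\rho_r(T)\in\mathbb{Q}(q,t)$: if $a,b,c,d$ are distinct, $\rho_r(T)=0$ when $\chi(c,d,a)=\chi(c,d,b)$ and $\rho_r(T)=1$ when $\chi(c,d,a)=\chi(d,c,b)$; if exactly three of them are distinct, then $\rho_r(T)=0$ if $b=c$, $\rho_r(T)=1$ if $b=d$, and $\rho_r(T)=t^{1-\chi(d,a,b)}\frac{1-q^{\ell+1}t^{A+1}}{1-q^{\ell+1}t^{A+2}}$ if $a=c$; if $a=c$ and $b=d$, $\rho_r(T)=1$. Also set $\rho_{\alpha_i}(T)=0$. For $T\in\mathrm{NAF}(\alpha,\tau)$ and $U\in\mathrm{F}(\alpha,\tau s_i)$, $P_i(T,U)=\left(\prod_{r=0}^{h-1}\rho_r(T)\right)(1-\rho_h(T))$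 if $U=\Omega_{0,h}(T)$ for some $h\in\{0,\ldots,\alpha_i\}$, and $P_i(T,U)=0$ otherwise. *)

theory Defs
  imports Main "HOL-Computational_Algebra.Polynomial" "HOL-Computational_Algebra.Fraction_Field"
    "HOL-Combinatorics.Permutations" "HOL-Combinatorics.Transposition"
begin

text \<open>Compositions are lists of naturals; positions are 1-indexed: part alpha j = alpha_j.\<close>
definition part :: "nat list \<Rightarrow> nat \<Rightarrow> nat" where
  "part \<alpha> j = (if 1 \<le> j \<and> j \<le> length \<alpha> then \<alpha> ! (j - 1) else 0)"

text \<open>Boxes are pairs (column, row).\<close>
definition dg :: "nat list \<Rightarrow> (nat \<times> nat) set" where
  "dg \<alpha> = {(j, r). 1 \<le> j \<and> j \<le> length \<alpha> \<and> 1 \<le> r \<and> r \<le> part \<alpha> j}"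

definition adg :: "nat list \<Rightarrow> (nat \<times> nat) set" where
  "adg \<alpha> = dg \<alpha> \<union> {(j, 0) | j. 1 \<le> j \<and> j \<le> length \<alpha>}"

definition leg :: "nat list \<Rightarrow> nat \<times> nat \<Rightarrow> nat" where
  "leg \<alpha> u = part \<alpha> (fst u) - snd u"

definition Arm :: "nat list \<Rightarrow> nat \<times> nat \<Rightarrow> (nat \<times> nat) set" where
  "Arm \<alpha> u = (case u of (j, r) \<Rightarrow>
     {(j', r') \<in> adg \<alpha>. r' = r - 1 \<and> j' < j \<and> part \<alpha> j' < part \<alpha> j}
     \<union> {(j', r') \<in> dg \<alpha>. r' = r \<and> j' > j \<and> part \<alpha> j' \<le> part \<alpha> j})"

definition arm :: "nat list \<Rightarrow> nat \<times> nat \<Rightarrow> nat" where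
  "arm \<alpha> u = card (Arm \<alpha> u)"

definition attack :: "nat list \<Rightarrow> nat \<times> nat \<Rightarrow> nat \<times> nat \<Rightarrow> bool" where
  "attack \<alpha> u v \<longleftrightarrow> u \<in> adg \<alpha> \<and> v \<in> adg \<alpha> \<and> u \<noteq> v \<and>
     (snd u = snd v
      \<or> (snd v = snd u + 1 \<and> fst v > fst u)
      \<or> (snd u = snd v + 1 \<and> fst u > fst v))"

type_synonym filling = "nat \<times> nat \<Rightarrow> nat"

text \<open>A filling is a map on adg alpha; we represent it extensionally (value 0 outside adg alpha),
  so that F alpha tau is in bijection with the set of maps adg alpha -> {1..n}.\<close>
definition F :: "nat list \<Rightarrow> (nat \<Rightarrow> nat) \<Rightarrow> filling set" where
  "F \<alpha> \<tau> = {T. (\<forall>u \<in> adg \<alpha>. T u \<in> {1..length \<alpha>})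
               \<and> (\<forall>j. 1 \<le> j \<and> j \<le> length \<alpha> \<longrightarrow> T (j, 0) = \<tau> j)
               \<and> (\<forall>u. u \<notin> adg \<alpha> \<longrightarrow> T u = 0)}"

definition NAF :: "nat list \<Rightarrow> (nat \<Rightarrow> nat) \<Rightarrow> filling set" where
  "NAF \<alpha> \<tau> = {T \<in> F \<alpha> \<tau>. \<forall>u v. attack \<alpha> u v \<longrightarrow> T u \<noteq> T v}"

definition chi :: "nat \<Rightarrow> nat \<Rightarrow> int" where
  "chi a b = (if a > b then 1 else 0)"

definition chi3 :: "nat \<Rightarrow> nat \<Rightarrow> nat \<Rightarrow> int" where
  "chi3 a b c = chi a b + chi b c - chi a c"

definition swap_row :: "nat \<Rightarrow> nat \<Rightarrow> filling \<Rightarrow> filling" where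
  "swap_row i r T = T((i, r) := T (i + 1, r), (i + 1, r) := T (i, r))"

definition Omega :: "nat \<Rightarrow> nat \<Rightarrow> filling \<Rightarrow> filling" where
  "Omega i h T = fold (\<lambda>r. swap_row i r) [0..<Suc h] T"

text \<open>The field Q(q,t) = fraction field of Q[t][q].\<close>
type_synonym qt = "rat poly poly fract"

definition qv :: qt where "qv = Fract [:0, 1:] 1"
definition tv :: qt where "tv = Fract [:[:0, 1:]:] 1"

definition rho :: "nat list \<Rightarrow> nat \<Rightarrow> filling \<Rightarrow> nat \<Rightarrow> qt" where
  "rho \<alpha> i T r =
    (if r = part \<alpha> i then 0 else
     (let a = T (i, r); b = T (i + 1, r); c = T (i, r + 1); d = T (i + 1, r + 1);
          A = arm \<alpha> (i + 1, r + 1); l = leg \<alpha> (i + 1, r + 1) in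
      if card {a, b, c, d} = 4 then
        (if chi3 c d a = chi3 c d b then 0
         else if chi3 c d a = chi3 d c b then 1 else 0)
      else if card {a, b, c, d} = 3 then
        (if b = c then 0
         else if b = d then 1
         else if a = c then
           tv powi (1 - chi3 d a b) * (1 - qv ^ (l + 1) * tv ^ (A + 1)) / (1 - qv ^ (l + 1) * tv ^ (A + 2))
         else 0)
      else if a = c \<and> b = d then 1
      else 0))"

definition P :: "nat list \<Rightarrow> nat \<Rightarrow> filling \<Rightarrow> filling \<Rightarrow> qt" where
  "P \<alpha> i T U =
    (if \<exists>h. h \<le> part \<alpha> i \<and> U = Omega i h T then
       (let h = (SOME h. h \<le> part \<alpha> i \<and> U = Omega i h T) in
        (\<Prod>r<h. rho \<alpha> i T r) * (1 - rho \<alpha> i T h))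
     else 0)"

end

theory Submission
  imports Defs
begin

text \<open>
  Since T is non-attacking, the boxes (i, r) and (i + 1, r) carry different entries for every
  r \<le> \<alpha>_i, so the fillings Omega_{0,h}(T) for 0 \<le> h \<le> \<alpha>_i are pairwise distinct elements of
  F(\<alpha>, \<sigma> s_i), and P_i(T, -) vanishes elsewhere. The sum therefore runs over h and telescopes,
  sum_h (prod_{r<h} \<rho>_r) (1 - \<rho>_h) = 1 - prod_{r \<le> \<alpha>_i} \<rho>_r, where the product is 0 because
  \<rho>_{\<alpha>_i} = 0.
\<close>

lemma sum_prod_times_one_minus:
  fixes \<rho> :: "nat \<Rightarrow> 'a::comm_ring_1"
  shows "(\<Sum>h\<le>k. (\<Prod>r<h. \<rho> r) * (1 - \<rho> h)) = 1 - (\<Prod>r<Suc k. \<rho> r)"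
  by (induction k) (auto simp: algebra_simps)

lemma finite_adg: "finite (adg \<alpha>)"
proof -
  have "part \<alpha> j \<le> sum_list \<alpha>" for j
    by (auto simp: part_def intro!: elem_le_sum_list)
  then have "adg \<alpha> \<subseteq> {..length \<alpha>} \<times> {..sum_list \<alpha>}"
    by (auto simp: adg_def dg_def intro: order_trans)
  then show ?thesis
    by (rule finite_subset) auto
qed

lemma finite_F: "finite (F \<alpha> \<tau>)"
proof -
  have "F \<alpha> \<tau> \<subseteq> {f. \<forall>x. (x \<in> adg \<alpha> \<longrightarrow> f x \<in> {1..length \<alpha>}) \<and> (x \<notin> adg \<alpha> \<longrightarrow> f x = 0)}"
    by (auto simp: F_def)
  then show ?thesis
    by (rule finite_subset) (intro finite_set_of_finite_funs finite_adg, simp)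
qed

lemma Omega_apply:
  "Omega i h T (j, r) =
     (if j = i \<and> r \<le> h then T (i + 1, r)
      else if j = i + 1 \<and> r \<le> h then T (i, r) else T (j, r))"
proof (induction h arbitrary: j r)
  case 0
  show ?case by (auto simp: Omega_def swap_row_def)
next
  case (Suc h)
  have "Omega i (Suc h) T = swap_row i (Suc h) (Omega i h T)"
    by (simp add: Omega_def)
  then show ?case
    by (simp add: swap_row_def Suc.IH le_Suc_eq)
qed

lemma columns_in_adg:
  assumes "1 \<le> i" "i < length \<alpha>" "part \<alpha> i = part \<alpha> (i + 1)" "r \<le> part \<alpha> i"
  shows "(i, r) \<in> adg \<alpha>" "(i + 1, r) \<in> adg \<alpha>"
  using assms by (auto simp: adg_def dg_def)

lemma NAF_row_distinct:
  assumes "T \<in> NAF \<alpha> \<tau>" "1 \<le> i" "i < length \<alpha>" "part \<alpha> i = part \<alpha> (i + 1)" "r \<le> part \<alpha> i"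
  shows "T (i, r) \<noteq> T (i + 1, r)"
proof -
  have "attack \<alpha> (i, r) (i + 1, r)"
    using columns_in_adg[OF assms(2-5)] by (simp add: attack_def)
  then show ?thesis
    using assms(1) by (simp add: NAF_def)
qed

lemma inj_on_Omega:
  assumes "\<And>r. r \<le> m \<Longrightarrow> T (i, r) \<noteq> T (i + 1, r)"
  shows "inj_on (\<lambda>h. Omega i h T) {..m}"
proof (rule linorder_inj_onI')
  fix h h' assume "h' \<in> {..m}" "h < h'"
  then have "Omega i h T (i, h') \<noteq> Omega i h' T (i, h')"
    using assms[of h'] by (simp add: Omega_apply)
  then show "Omega i h T \<noteq> Omega i h' T"
    by metis
qed

lemma Omega_in_F:
  assumes "T \<in> F \<alpha> \<tau>" "1 \<le> i" "i < length \<alpha>" "part \<alpha> i = part \<alpha> (i + 1)" "h \<le> part \<alpha> i"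
  shows "Omega i h T \<in> F \<alpha> (\<tau> \<circ> transpose i (i + 1))"
proof -
  have swapped_boxes: "(i, r) \<in> adg \<alpha>" "(i + 1, r) \<in> adg \<alpha>" if "r \<le> h" for r
    using columns_in_adg[OF assms(2-4)] that assms(5) by auto
  have "Omega i h T u \<in> {1..length \<alpha>}" if "u \<in> adg \<alpha>" for u
    using assms(1) that swapped_boxes by (cases u) (auto simp: F_def Omega_apply)
  moreover have "Omega i h T u = 0" if "u \<notin> adg \<alpha>" for u
    using assms(1) that swapped_boxes by (cases u) (auto simp: F_def Omega_apply)
  moreover have "Omega i h T (j, 0) = (\<tau> \<circ> transpose i (i + 1)) j"
    if "1 \<le> j" "j \<le> length \<alpha>" for j
    using assms(1-3) that by (auto simp: F_def Omega_apply)
  ultimately show ?thesis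
    by (simp add: F_def)
qed

lemma P_Omega:
  assumes "inj_on (\<lambda>h. Omega i h T) {..part \<alpha> i}" "h \<le> part \<alpha> i"
  shows "P \<alpha> i T (Omega i h T) = (\<Prod>r<h. rho \<alpha> i T r) * (1 - rho \<alpha> i T h)"
proof -
  have "(SOME h'. h' \<le> part \<alpha> i \<and> Omega i h T = Omega i h' T) = h"
    using assms by (intro some_equality) (auto dest: inj_onD)
  then show ?thesis
    using assms(2) by (auto simp: P_def)
qed

lemma P_eq_0:
  assumes "U \<notin> (\<lambda>h. Omega i h T) ` {..part \<alpha> i}"
  shows "P \<alpha> i T U = 0"
  using assms by (auto simp: P_def)

lemma rho_top: "rho \<alpha> i T (part \<alpha> i) = 0"
  by (simp add: rho_def)

theorem proposition3p4:
  fixes \<alpha> :: "nat list" and \<sigma> :: "nat \<Rightarrow> nat" and i :: nat and T :: filling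
  assumes "\<sigma> permutes {1..length \<alpha>}"
    and "1 \<le> i" and "i < length \<alpha>"
    and "part \<alpha> i = part \<alpha> (i + 1)"
    and "T \<in> NAF \<alpha> \<sigma>"
  shows "(\<Sum>U \<in> F \<alpha> (\<sigma> \<circ> transpose i (i + 1)). P \<alpha> i T U) = 1"
proof -
  let ?m = "part \<alpha> i" and ?\<Omega> = "\<lambda>h. Omega i h T"
  have inj: "inj_on ?\<Omega> {..?m}"
    using NAF_row_distinct[OF assms(5,2-4)] by (rule inj_on_Omega)
  have "?\<Omega> ` {..?m} \<subseteq> F \<alpha> (\<sigma> \<circ> transpose i (i + 1))"
    using assms(5) Omega_in_F[OF _ assms(2-4)] by (auto simp: NAF_def)
  then have "(\<Sum>U \<in> F \<alpha> (\<sigma> \<circ> transpose i (i + 1)). P \<alpha> i T U) = (\<Sum>U \<in> ?\<Omega> ` {..?m}. P \<alpha> i T U)"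
    using P_eq_0 by (intro sum.mono_neutral_right finite_F) auto
  also have "\<dots> = (\<Sum>h\<le>?m. (\<Prod>r<h. rho \<alpha> i T r) * (1 - rho \<alpha> i T h))"
    using inj by (simp add: sum.reindex P_Omega)
  also have "\<dots> = 1 - (\<Prod>r<Suc ?m. rho \<alpha> i T r)"
    by (rule sum_prod_times_one_minus)
  also have "(\<Prod>r<Suc ?m. rho \<alpha> i T r) = 0"
    using rho_top by (intro prod_zero) auto
  finally show ?thesis
    by (simp only: diff_zero)
qed

end
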